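(* Let $\mathbb{F}\in\{\mathbb{R},\mathbb{C}\}$, $A\in\mathbb{F}^{m\times n}$, $b\in\mathbb{F}^m$, $\mu>0$, and let $N\ge1$ be an integer with $\beta_N>0$. Let $x'$ be a stationary point of $\mathcal{K}_{reg}$, set $z'=(I-A^*A)x'+A^*b$, and assume that $$|z'_i|\notin\Big[\beta_N^2\sqrt{\mu},\ \frac{\sqrt{\mu}}{\beta_N^2}\Big]\quad\text{for all }i\in\{1,\dots,n\}$$ (this condition is automatically fulfilled if $\beta_N>1$, the interval then being empty). If $x''\neq x'$ is another stationary point of $\mathcal{K}_{reg}$, then $\mathrm{card}(x''-x')>N$.
   Context: $\mathrm{card}(x)$ is the number of nonzero entries; $\beta_k=\inf\{\|Ax\|_2/\|x\|_2:x\ne0,\ \mathrm{card}(x)\le k\}$. $\mathcal{K}_{reg}(x)=\mathcal{Q}_2(\mu\,\mathrm{card})(x)+\|Ax-b\|_2^2$ with $\mathcal{Q}_2(\mu\,\mathrm{card})(x)=\sum_{j=1}^n\big(\mu-(\max\{\sqrt{\mu}-|x_j|,0\})^2\big)$. $A^*$ is the conjugate transpose, $\langle x,y\rangle=\sum_i x_i\overline{y_i}$. A stationary point of a function $g$ is a point $x$ with $0$ in the Fréchet subdifferential $\hat\partial g(x)$, i.e. the set of $v$ with $\liminf_{y\to x,y\ne x}(g(y)-g(x)-\mathrm{Re}\langle v,y-x\rangle)/\|y-x\|\ge0$. *)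

theory Defs
  imports "HOL-Analysis.Analysis"
begin

text \<open>Vectors in F^n are 'a^'n, matrices in F^(m x n) are 'a^'n^'m, with
  'a = real or 'a = complex. The scalar conjugation is passed explicitly
  (id for real, cnj for complex).  For both scalar types the library inner
  product x \<bullet> y on 'a^'n equals Re (sum_i x_i * conj y_i), and norm is the
  Euclidean 2-norm.\<close>

definition card_nz :: "'a::zero^'n \<Rightarrow> nat" where
  "card_nz x = card {i. x $ i \<noteq> 0}"

definition adjoint_mat :: "('a \<Rightarrow> 'a) \<Rightarrow> 'a^'n^'m \<Rightarrow> 'a^'m^'n" where
  "adjoint_mat cj A = (\<chi> i j. cj (A $ j $ i))"

definition beta_k :: "'a::real_normed_field^'n^'m \<Rightarrow> nat \<Rightarrow> real" where
  "beta_k A k = Inf {norm (A *v x) / norm x | x. x \<noteq> 0 \<and> card_nz x \<le> k}"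

definition Q2_card :: "real \<Rightarrow> 'a::real_normed_vector^'n \<Rightarrow> real" where
  "Q2_card \<mu> x = (\<Sum>j\<in>UNIV. \<mu> - (max (sqrt \<mu> - norm (x $ j)) 0)^2)"

definition K_reg :: "real \<Rightarrow> 'a::real_normed_field^'n^'m \<Rightarrow> 'a^'m \<Rightarrow> 'a^'n \<Rightarrow> real" where
  "K_reg \<mu> A b x = Q2_card \<mu> x + (norm (A *v x - b))^2"

definition frechet_subdiff :: "('v::real_inner \<Rightarrow> real) \<Rightarrow> 'v \<Rightarrow> 'v set" where
  "frechet_subdiff g x = {v. Liminf (at x)
      (\<lambda>y. ereal ((g y - g x - v \<bullet> (y - x)) / norm (y - x))) \<ge> 0}"

definition stationary :: "('v::real_inner \<Rightarrow> real) \<Rightarrow> 'v \<Rightarrow> bool" where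
  "stationary g x \<longleftrightarrow> 0 \<in> frechet_subdiff g x"

end

theory Submission
  imports Defs
begin

(* Stationarity of K_reg decouples over the coordinates: with z = x - A^*(Ax - b), every pair
   (x_j, z_j) lies in the graph of the set-valued hard-thresholding map at level sqrt mu.
   That graph is monotone, and even (1 - gamma)-strongly monotone at every z_j outside the
   annulus gamma sqrt mu <= |z_j| <= sqrt mu / gamma.  For two stationary points with
   difference d one has z'' - z' = d - A^*A d, hence <z'' - z', d> = |d|^2 - |Ad|^2, which is
   at most (1 - beta_N^2) |d|^2 when card d <= N.  With gamma = beta_N^2 this contradicts strong
   monotonicity unless d = 0. *)

lemma stationary_eventually_diff_quotient_gt:
  fixes g :: "'v::real_inner \<Rightarrow> real"
  assumes "stationary g x" "c < 0"
  shows "\<forall>\<^sub>F y in at x. c < (g y - g x) / norm (y - x)"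
proof -
  have "0 \<le> Liminf (at x) (\<lambda>y. ereal ((g y - g x - 0 \<bullet> (y - x)) / norm (y - x)))"
    using assms(1) unfolding stationary_def frechet_subdiff_def by simp
  moreover have "ereal c < 0" using assms(2) by simp
  ultimately show ?thesis unfolding le_Liminf_iff by fastforce
qed

lemma stationary_imp_ray_slope_nonneg:
  fixes g :: "'v::real_inner \<Rightarrow> real"
  assumes stat: "stationary g x" and "e \<noteq> 0" "\<delta> > 0"
    and model: "\<And>t. 0 < t \<Longrightarrow> t < \<delta> \<Longrightarrow> g (x + t *\<^sub>R e) - g x \<le> t * D + t\<^sup>2 * C"
  shows "D \<ge> 0"
proof (rule ccontr)
  assume "\<not> D \<ge> 0"
  hence D: "D < 0" by simp
  have ne: "norm e > 0" using \<open>e \<noteq> 0\<close> by simp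
  have "filterlim (\<lambda>t. x + t *\<^sub>R e) (at x) (at_right 0)"
  proof (rule filterlim_atI)
    show "((\<lambda>t. x + t *\<^sub>R e) \<longlongrightarrow> x) (at_right 0)"
      by (auto intro!: tendsto_eq_intros)
    show "\<forall>\<^sub>F t in at_right 0. x + t *\<^sub>R e \<noteq> x"
      using \<open>e \<noteq> 0\<close> by (auto simp: eventually_at_right_field intro!: exI[of _ 1])
  qed
  with stationary_eventually_diff_quotient_gt[OF stat, of "D / (2 * norm e)"]
  have "\<forall>\<^sub>F t in at_right 0. D / (2 * norm e) < (g (x + t *\<^sub>R e) - g x) / norm (t *\<^sub>R e)"
    using D ne by (auto simp: divide_neg_pos dest: eventually_compose_filterlim)
  moreover have "\<forall>\<^sub>F t in at_right 0. t < \<delta>"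
    using \<open>\<delta> > 0\<close> by (auto simp: eventually_at_right_field intro!: exI[of _ \<delta>])
  moreover have "\<forall>\<^sub>F t in at_right (0::real). t * C < - D / 2"
    using D by (intro order_tendstoD tendsto_eq_intros) auto
  ultimately have "\<forall>\<^sub>F t in at_right 0. D / (2 * norm e) < (g (x + t *\<^sub>R e) - g x) / norm (t *\<^sub>R e)
      \<and> t < \<delta> \<and> t * C < - D / 2"
    by eventually_elim auto
  then obtain t where t: "0 < t" "t < \<delta>" "t * C < - D / 2"
    and lower: "D / (2 * norm e) < (g (x + t *\<^sub>R e) - g x) / norm (t *\<^sub>R e)"
    unfolding eventually_at_right_field by (metis field_sum_of_halves half_gt_zero less_add_same_cancel1)
  have "t * D / 2 < g (x + t *\<^sub>R e) - g x"
    using lower t ne by (simp add: field_simps)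
  also have "\<dots> \<le> t * D + t\<^sup>2 * C" by (rule model) (use t in auto)
  finally have "0 < t * (D / 2 + t * C)" by (simp add: power2_eq_square algebra_simps)
  thus False using t D by (simp add: zero_less_mult_iff)
qed

lemma norm_add_scaleR_le_quadratic:
  fixes x w :: "'v::real_inner"
  assumes "x \<noteq> 0" "0 \<le> t" "t * norm w \<le> norm x"
  shows "norm (x + t *\<^sub>R w)
    \<le> norm x + t * ((x \<bullet> w) / norm x) + t\<^sup>2 * ((norm w)\<^sup>2 / (2 * norm x))"
    (is "_ \<le> norm x + ?a + ?b")
proof (rule power2_le_imp_le)
  have nx: "norm x > 0" using assms(1) by simp
  have "- (x \<bullet> w) \<le> norm x * norm w"
    using norm_cauchy_schwarz[of "- x" w] by simp
  hence "- (t * norm w) \<le> t * ((x \<bullet> w) / norm x)"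
    using assms(2) nx mult_left_mono[of "- norm w" "(x \<bullet> w) / norm x" t]
    by (simp add: field_simps)
  moreover have "0 \<le> t\<^sup>2 * ((norm w)\<^sup>2 / (2 * norm x))" using nx by simp
  ultimately show "0 \<le> norm x + ?a + ?b" using assms(3) by linarith
  have "(norm (x + t *\<^sub>R w))\<^sup>2 = (norm x)\<^sup>2 + 2 * t * (x \<bullet> w) + t\<^sup>2 * (norm w)\<^sup>2"
    unfolding power2_norm_eq_inner
    by (simp add: inner_commute power2_eq_square algebra_simps)
  also have "\<dots> = (norm x + ?a + ?b)\<^sup>2 - (?a + ?b)\<^sup>2"
    using nx by (simp add: power2_eq_square field_simps)
  finally show "(norm (x + t *\<^sub>R w))\<^sup>2 \<le> (norm x + ?a + ?b)\<^sup>2" by simp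
qed

definition card_envelope :: "real \<Rightarrow> 'a::real_normed_vector \<Rightarrow> real" where
  "card_envelope \<mu> s = \<mu> - (max (sqrt \<mu> - norm s) 0)\<^sup>2"

lemma Q2_card_eq_sum_envelope: "Q2_card \<mu> x = (\<Sum>j\<in>UNIV. card_envelope \<mu> (x $ j))"
  unfolding Q2_card_def card_envelope_def ..

lemma card_envelope_le: "card_envelope \<mu> s \<le> \<mu>"
  unfolding card_envelope_def by simp

lemma card_envelope_outside: "sqrt \<mu> \<le> norm s \<Longrightarrow> card_envelope \<mu> s = \<mu>"
  unfolding card_envelope_def by simp

lemma card_envelope_inside:
  "0 \<le> \<mu> \<Longrightarrow> norm s \<le> sqrt \<mu> \<Longrightarrow> card_envelope \<mu> s = 2 * sqrt \<mu> * norm s - (norm s)\<^sup>2"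
  unfolding card_envelope_def by (simp add: power2_diff)

lemma card_envelope_le_linear:
  assumes "0 \<le> \<mu>"
  shows "card_envelope \<mu> s \<le> 2 * sqrt \<mu> * norm s"
proof (cases "norm s \<le> sqrt \<mu>")
  case True
  thus ?thesis using card_envelope_inside[OF assms True] by simp
next
  case False
  have "\<mu> = sqrt \<mu> * sqrt \<mu>" using assms by simp
  also have "\<dots> \<le> 2 * sqrt \<mu> * norm s"
    using False assms mult_left_mono[of "sqrt \<mu>" "norm s" "sqrt \<mu>"] by simp
  finally show ?thesis using card_envelope_le[of \<mu> s] by linarith
qed

lemma card_envelope_step_inside:
  fixes s w :: "'v::real_inner"
  assumes "0 \<le> \<mu>" "s \<noteq> 0" "0 \<le> t" "t * norm w \<le> norm s" "norm s + t * norm w \<le> sqrt \<mu>"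
  shows "card_envelope \<mu> (s + t *\<^sub>R w) - card_envelope \<mu> s
    \<le> t * (2 * (((sqrt \<mu> / norm s - 1) *\<^sub>R s) \<bullet> w)) + t\<^sup>2 * ((sqrt \<mu> / norm s - 1) * (norm w)\<^sup>2)"
proof -
  have ns: "norm s > 0" using assms(2) by simp
  have s_inside: "norm s \<le> sqrt \<mu>"
    using assms(3,5) mult_nonneg_nonneg[OF assms(3) norm_ge_zero[of w]] by linarith
  have step_inside: "norm (s + t *\<^sub>R w) \<le> sqrt \<mu>"
    using norm_triangle_ineq[of s "t *\<^sub>R w"] assms(3,5) by simp
  have "(norm (s + t *\<^sub>R w))\<^sup>2 = (norm s)\<^sup>2 + 2 * t * (s \<bullet> w) + t\<^sup>2 * (norm w)\<^sup>2"
    unfolding power2_norm_eq_inner by (simp add: inner_commute power2_eq_square algebra_simps)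
  hence "card_envelope \<mu> (s + t *\<^sub>R w) - card_envelope \<mu> s
      = 2 * sqrt \<mu> * norm (s + t *\<^sub>R w)
        - ((norm s)\<^sup>2 + 2 * t * (s \<bullet> w) + t\<^sup>2 * (norm w)\<^sup>2) - (2 * sqrt \<mu> * norm s - (norm s)\<^sup>2)"
    by (simp add: card_envelope_inside[OF assms(1) s_inside] card_envelope_inside[OF assms(1) step_inside])
  moreover have "2 * sqrt \<mu> * norm (s + t *\<^sub>R w)
      \<le> 2 * sqrt \<mu> * (norm s + t * ((s \<bullet> w) / norm s) + t\<^sup>2 * ((norm w)\<^sup>2 / (2 * norm s)))"
    using norm_add_scaleR_le_quadratic[OF assms(2-4)] assms(1) by (simp add: mult_left_mono)
  moreover have "2 * sqrt \<mu> * (norm s + t * ((s \<bullet> w) / norm s) + t\<^sup>2 * ((norm w)\<^sup>2 / (2 * norm s)))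
      - ((norm s)\<^sup>2 + 2 * t * (s \<bullet> w) + t\<^sup>2 * (norm w)\<^sup>2) - (2 * sqrt \<mu> * norm s - (norm s)\<^sup>2)
      = t * (2 * (((sqrt \<mu> / norm s - 1) *\<^sub>R s) \<bullet> w)) + t\<^sup>2 * ((sqrt \<mu> / norm s - 1) * (norm w)\<^sup>2)"
  proof -
    have "2 * r * (n + t * (a / n) + t\<^sup>2 * (m / (2 * n))) - (n\<^sup>2 + 2 * t * a + t\<^sup>2 * m) - (2 * r * n - n\<^sup>2)
        = t * (2 * ((r / n - 1) * a)) + t\<^sup>2 * ((r / n - 1) * m)" if "n > 0" for r n a m :: real
      using that by (simp add: field_simps power2_eq_square)
    thus ?thesis using ns by simp
  qed
  ultimately show ?thesis by linarith
qed

(* The graph of the set-valued hard-thresholding map at level sqrt mu, read from x to z: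
   x = 0 if |z| < sqrt mu, x = z if |z| > sqrt mu, and x is any point of the segment [0, z]
   if |z| = sqrt mu. *)
definition hard_threshold_rel :: "real \<Rightarrow> 'v::real_inner \<Rightarrow> 'v \<Rightarrow> bool" where
  "hard_threshold_rel \<mu> x z \<longleftrightarrow>
    (x = 0 \<longrightarrow> norm z \<le> sqrt \<mu>) \<and>
    (x \<noteq> 0 \<and> norm x < sqrt \<mu> \<longrightarrow> z = (sqrt \<mu> / norm x) *\<^sub>R x) \<and>
    (sqrt \<mu> \<le> norm x \<longrightarrow> z = x)"

lemma hard_threshold_rel_nonzero:
  "hard_threshold_rel \<mu> x z \<Longrightarrow> x \<noteq> 0 \<Longrightarrow> z = (max (sqrt \<mu>) (norm x) / norm x) *\<^sub>R x"
  unfolding hard_threshold_rel_def by (cases "norm x < sqrt \<mu>") (auto simp: max_def)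

lemma hard_threshold_rel_inner:
  assumes "hard_threshold_rel \<mu> x z"
  shows "z \<bullet> x = max (sqrt \<mu>) (norm x) * norm x"
proof (cases "x = 0")
  case False
  define M where "M = max (sqrt \<mu>) (norm x)"
  have "z \<bullet> x = M / norm x * (norm x)\<^sup>2"
    using hard_threshold_rel_nonzero[OF assms False] unfolding M_def power2_norm_eq_inner by simp
  also have "\<dots> = M * norm x" using False by (simp add: power2_eq_square)
  finally show ?thesis unfolding M_def .
qed simp

lemma hard_threshold_rel_norm_eq:
  assumes "hard_threshold_rel \<mu> x z" "x \<noteq> 0"
  shows "norm z = max (sqrt \<mu>) (norm x)"
proof -
  define M where "M = max (sqrt \<mu>) (norm x)"
  have "0 \<le> M" unfolding M_def by (simp add: le_max_iff_disj)
  hence "norm z = M / norm x * norm x"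
    using hard_threshold_rel_nonzero[OF assms] unfolding M_def by simp
  thus ?thesis using assms(2) unfolding M_def by simp
qed

lemma hard_threshold_rel_norm_le:
  assumes "hard_threshold_rel \<mu> x z"
  shows "norm z \<le> max (sqrt \<mu>) (norm x)"
proof (cases "x = 0")
  case True
  thus ?thesis using assms unfolding hard_threshold_rel_def by (simp add: max.coboundedI1)
qed (simp add: hard_threshold_rel_norm_eq[OF assms])

lemma hard_threshold_rel_norm_diff_le:
  assumes "hard_threshold_rel \<mu> x z"
  shows "norm (z - x) \<le> max (sqrt \<mu>) (norm x) - norm x"
proof (cases "x = 0")
  case False
  define M where "M = max (sqrt \<mu>) (norm x)"
  have nx: "norm x > 0" using False by simp
  have "norm x \<le> M" unfolding M_def by simp
  hence c: "0 \<le> M / norm x - 1" using nx by simp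
  have "z - x = (M / norm x - 1) *\<^sub>R x"
    using hard_threshold_rel_nonzero[OF assms False] unfolding M_def by (simp add: algebra_simps)
  hence "norm (z - x) = (M / norm x - 1) * norm x" using c by simp
  also have "\<dots> = M - norm x" using nx by (simp add: left_diff_distrib)
  finally show ?thesis unfolding M_def by simp
qed (use assms in \<open>simp add: hard_threshold_rel_def le_max_iff_disj\<close>)

lemma hard_threshold_rel_monotone:
  assumes "hard_threshold_rel \<mu> x z" "hard_threshold_rel \<mu> y w"
  shows "0 \<le> (w - z) \<bullet> (y - x)"
proof -
  define Mx My where "Mx = max (sqrt \<mu>) (norm x)" and "My = max (sqrt \<mu>) (norm y)"
  have "0 \<le> (My - Mx) * (norm y - norm x)"
  proof (cases "norm y \<le> norm x")
    case True
    hence "My \<le> Mx" unfolding Mx_def My_def by (intro max.mono) auto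
    thus ?thesis using True by (simp add: mult_nonpos_nonpos)
  next
    case False
    hence "Mx \<le> My" unfolding Mx_def My_def by (intro max.mono) auto
    thus ?thesis using False by simp
  qed
  moreover have "w \<bullet> x \<le> My * norm x"
    using norm_cauchy_schwarz[of w x] hard_threshold_rel_norm_le[OF assms(2)] unfolding My_def
    by (meson mult_right_mono norm_ge_zero order_trans)
  moreover have "z \<bullet> y \<le> Mx * norm y"
    using norm_cauchy_schwarz[of z y] hard_threshold_rel_norm_le[OF assms(1)] unfolding Mx_def
    by (meson mult_right_mono norm_ge_zero order_trans)
  moreover have "z \<bullet> x = Mx * norm x" "w \<bullet> y = My * norm y"
    using hard_threshold_rel_inner[OF assms(1)] hard_threshold_rel_inner[OF assms(2)]
    unfolding Mx_def My_def by auto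
  moreover have "(w - z) \<bullet> (y - x) = w \<bullet> y + z \<bullet> x - w \<bullet> x - z \<bullet> y"
    by (simp add: inner_diff_left inner_diff_right inner_commute)
  ultimately show ?thesis by (simp add: algebra_simps)
qed

lemma hard_threshold_rel_inner_diff_ge:
  assumes "hard_threshold_rel \<mu> y w"
  shows "- ((max (sqrt \<mu>) (norm y) - norm y) * (norm x - norm y)) \<le> (w - y) \<bullet> (y - x)"
proof -
  define M where "M = max (sqrt \<mu>) (norm y)"
  have "(w - y) \<bullet> x \<le> (M - norm y) * norm x"
    using norm_cauchy_schwarz[of "w - y" x] hard_threshold_rel_norm_diff_le[OF assms]
    unfolding M_def by (meson mult_right_mono norm_ge_zero order_trans)
  moreover have "(w - y) \<bullet> y = (M - norm y) * norm y"
    using hard_threshold_rel_inner[OF assms] unfolding M_def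
    by (simp add: inner_diff_left power2_norm_eq_inner[symmetric] power2_eq_square left_diff_distrib)
  ultimately show ?thesis unfolding M_def by (simp add: algebra_simps)
qed

lemma hard_threshold_rel_strict_below:
  assumes "hard_threshold_rel \<mu> x z" "hard_threshold_rel \<mu> y w"
    and "0 < \<gamma>" "\<gamma> \<le> 1" "norm z < \<gamma> * sqrt \<mu>" "y \<noteq> x"
  shows "(1 - \<gamma>) * (norm (y - x))\<^sup>2 < (w - z) \<bullet> (y - x)"
proof -
  have "0 < \<gamma> * sqrt \<mu>" using assms(5) norm_ge_zero[of z] by linarith
  hence "0 \<le> sqrt \<mu>" using assms(3) by (simp add: zero_less_mult_iff)
  hence "\<gamma> * sqrt \<mu> \<le> sqrt \<mu>"
    using assms(3,4) by (intro mult_left_le_one_le) auto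
  hence "x = 0"
    using hard_threshold_rel_norm_eq[OF assms(1)] assms(5) by (metis max.cobounded1 not_le order_trans)
  hence ny: "0 < norm y" using assms(6) by simp
  define M where "M = max (sqrt \<mu>) (norm y)"
  have "norm y \<le> M" unfolding M_def by simp
  hence "(1 - \<gamma>) * (norm (y - x))\<^sup>2 \<le> (1 - \<gamma>) * M * norm y"
    using \<open>x = 0\<close> assms(4)
    by (simp add: power2_eq_square mult.assoc mult_left_mono mult_right_mono)
  also have "\<dots> = M * norm y - \<gamma> * M * norm y" by (simp add: algebra_simps)
  also have "\<dots> \<le> M * norm y - \<gamma> * sqrt \<mu> * norm y"
  proof -
    have "sqrt \<mu> \<le> M" unfolding M_def by simp
    hence "\<gamma> * sqrt \<mu> * norm y \<le> \<gamma> * M * norm y"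
      using assms(3) by (intro mult_right_mono mult_left_mono) auto
    thus ?thesis by linarith
  qed
  also have "\<dots> < M * norm y - z \<bullet> y"
    using norm_cauchy_schwarz[of z y] mult_strict_right_mono[OF assms(5) ny] by linarith
  also have "\<dots> = (w - z) \<bullet> (y - x)"
    using hard_threshold_rel_inner[OF assms(2)] \<open>x = 0\<close> unfolding M_def by (simp add: inner_diff_left)
  finally show ?thesis .
qed

lemma hard_threshold_rel_strict_above:
  assumes "hard_threshold_rel \<mu> x z" "hard_threshold_rel \<mu> y w"
    and "0 < \<gamma>" "\<gamma> \<le> 1" "sqrt \<mu> / \<gamma> < norm z" "y \<noteq> x" "0 \<le> \<mu>"
  shows "(1 - \<gamma>) * (norm (y - x))\<^sup>2 < (w - z) \<bullet> (y - x)"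
proof -
  have "sqrt \<mu> * \<gamma> \<le> sqrt \<mu>"
    using assms(3,4,7) by (intro mult_right_le_one_le) auto
  hence "sqrt \<mu> \<le> sqrt \<mu> / \<gamma>"
    using assms(3) by (simp add: le_divide_eq)
  hence "sqrt \<mu> < norm z" using assms(5) by linarith
  hence "x \<noteq> 0" using assms(1) unfolding hard_threshold_rel_def by auto
  hence "norm z = max (sqrt \<mu>) (norm x)" by (rule hard_threshold_rel_norm_eq[OF assms(1)])
  hence nx: "norm z = norm x" "sqrt \<mu> < norm x" using \<open>sqrt \<mu> < norm z\<close> by (auto simp: max_def split: if_splits)
  hence "z = x" using assms(1) unfolding hard_threshold_rel_def by auto
  have gx: "sqrt \<mu> < \<gamma> * norm x"
    using assms(3,5) nx(1) by (simp add: divide_less_eq mult.commute)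
  define M where "M = max (sqrt \<mu>) (norm y)"
  have "(M - norm y) * (norm x - norm y) < \<gamma> * (norm (y - x))\<^sup>2"
  proof (cases "sqrt \<mu> \<le> norm y")
    case True
    thus ?thesis using assms(3,6) unfolding M_def by simp
  next
    case False
    hence pos: "0 < norm x - norm y" using nx(2) by linarith
    have "\<gamma> * norm y \<le> norm y" using assms(3,4) by (intro mult_left_le_one_le) auto
    hence "M - norm y < \<gamma> * (norm x - norm y)"
      using False gx unfolding M_def by (simp add: right_diff_distrib)
    hence "(M - norm y) * (norm x - norm y) < \<gamma> * (norm x - norm y)\<^sup>2"
      using pos by (simp add: power2_eq_square)
    also have "\<dots> \<le> \<gamma> * (norm (y - x))\<^sup>2"
      using pos assms(3) norm_triangle_ineq2[of x y]
      by (simp add: norm_minus_commute power_mono)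
    finally show ?thesis .
  qed
  moreover have "- ((M - norm y) * (norm x - norm y)) \<le> (w - y) \<bullet> (y - x)"
    using hard_threshold_rel_inner_diff_ge[OF assms(2)] unfolding M_def .
  moreover have "(w - z) \<bullet> (y - x) = (norm (y - x))\<^sup>2 + (w - y) \<bullet> (y - x)"
    using \<open>z = x\<close> by (simp add: power2_norm_eq_inner inner_diff_left)
  ultimately show ?thesis by (simp add: algebra_simps)
qed

lemma hard_threshold_rel_strongly_monotone:
  assumes "hard_threshold_rel \<mu> x z" "hard_threshold_rel \<mu> y w" "0 \<le> \<mu>" "0 < \<gamma>"
    and "\<not> (\<gamma> * sqrt \<mu> \<le> norm z \<and> norm z \<le> sqrt \<mu> / \<gamma>)" "y \<noteq> x"
  shows "(1 - \<gamma>) * (norm (y - x))\<^sup>2 < (w - z) \<bullet> (y - x)"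
proof (cases "\<gamma> \<le> 1")
  case True
  thus ?thesis
    using assms hard_threshold_rel_strict_below hard_threshold_rel_strict_above by (metis not_le)
next
  case False
  hence "(1 - \<gamma>) * (norm (y - x))\<^sup>2 < 0" using assms(6) by (simp add: mult_neg_pos)
  thus ?thesis using hard_threshold_rel_monotone[OF assms(1,2)] by linarith
qed

lemma hard_threshold_rel_vec_strongly_monotone:
  fixes x y z w :: "'v::real_inner^'n"
  assumes "\<And>i. hard_threshold_rel \<mu> (x $ i) (z $ i)" "\<And>i. hard_threshold_rel \<mu> (y $ i) (w $ i)"
    and "0 \<le> \<mu>" "0 < \<gamma>"
    and "\<And>i. \<not> (\<gamma> * sqrt \<mu> \<le> norm (z $ i) \<and> norm (z $ i) \<le> sqrt \<mu> / \<gamma>)" "y \<noteq> x"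
  shows "(1 - \<gamma>) * (norm (y - x))\<^sup>2 < (w - z) \<bullet> (y - x)"
proof -
  have strict: "(1 - \<gamma>) * (norm (y $ i - x $ i))\<^sup>2 < (w $ i - z $ i) \<bullet> (y $ i - x $ i)"
    if "y $ i \<noteq> x $ i" for i
    using hard_threshold_rel_strongly_monotone[OF assms(1,2,3,4,5) that] .
  obtain k where "y $ k \<noteq> x $ k" using assms(6) by (metis vec_eq_iff)
  have "(1 - \<gamma>) * (norm (y - x))\<^sup>2 = (\<Sum>i\<in>UNIV. (1 - \<gamma>) * (norm (y $ i - x $ i))\<^sup>2)"
    by (simp add: power2_norm_eq_inner inner_vec_def sum_distrib_left)
  also have "\<dots> < (\<Sum>i\<in>UNIV. (w $ i - z $ i) \<bullet> (y $ i - x $ i))"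
  proof (rule sum_strict_mono_ex1)
    show "\<forall>i\<in>UNIV. (1 - \<gamma>) * (norm (y $ i - x $ i))\<^sup>2 \<le> (w $ i - z $ i) \<bullet> (y $ i - x $ i)"
      using strict by (metis order.strict_implies_order order_refl diff_self inner_zero_right
          mult_zero_right norm_zero zero_power2)
    show "\<exists>i\<in>UNIV. (1 - \<gamma>) * (norm (y $ i - x $ i))\<^sup>2 < (w $ i - z $ i) \<bullet> (y $ i - x $ i)"
      using strict \<open>y $ k \<noteq> x $ k\<close> by blast
  qed simp
  also have "\<dots> = (w - z) \<bullet> (y - x)" by (simp add: inner_vec_def)
  finally show ?thesis .
qed

lemma beta_k_mult_norm_le:
  fixes A :: "'a::real_normed_field^'n^'m"
  assumes "d \<noteq> 0" "card_nz d \<le> N"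
  shows "beta_k A N * norm d \<le> norm (A *v d)"
proof -
  have "beta_k A N \<le> norm (A *v d) / norm d"
    unfolding beta_k_def
  proof (rule cInf_lower)
    show "norm (A *v d) / norm d \<in> {norm (A *v x) / norm x |x. x \<noteq> 0 \<and> card_nz x \<le> N}"
      using assms by blast
    show "bdd_below {norm (A *v x) / norm x |x. x \<noteq> 0 \<and> card_nz x \<le> N}"
      by (rule bdd_belowI[of _ 0]) auto
  qed
  thus ?thesis using assms(1) by (simp add: le_divide_eq)
qed

lemma matrix_vector_mult_scaleR_right:
  fixes A :: "'a::real_normed_algebra_1^'n^'m"
  shows "A *v (c *\<^sub>R v) = c *\<^sub>R (A *v v)"
  by (simp add: vec_eq_iff matrix_vector_mult_def scaleR_sum_right)

locale conjugation =
  fixes cj :: "'a::{real_normed_field,real_inner} \<Rightarrow> 'a"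
  assumes mult_inner_conj: "(a * b) \<bullet> c = b \<bullet> (cj a * c)"
begin

lemma adjoint_mat_inner: "(A *v d) \<bullet> r = d \<bullet> (adjoint_mat cj A *v r)"
proof -
  have "(A *v d) \<bullet> r = (\<Sum>i\<in>UNIV. \<Sum>k\<in>UNIV. (A $ i $ k * d $ k) \<bullet> r $ i)"
    unfolding inner_vec_def matrix_vector_mult_def by (simp add: inner_sum_left)
  also have "\<dots> = (\<Sum>i\<in>UNIV. \<Sum>k\<in>UNIV. d $ k \<bullet> (cj (A $ i $ k) * r $ i))"
    by (simp add: mult_inner_conj)
  also have "\<dots> = (\<Sum>k\<in>UNIV. \<Sum>i\<in>UNIV. d $ k \<bullet> (cj (A $ i $ k) * r $ i))"
    by (rule sum.swap)
  also have "\<dots> = d \<bullet> (adjoint_mat cj A *v r)"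
    unfolding inner_vec_def matrix_vector_mult_def adjoint_mat_def by (simp add: inner_sum_right)
  finally show ?thesis .
qed

lemma K_reg_axis_step:
  "K_reg \<mu> A b (x + t *\<^sub>R axis j w) - K_reg \<mu> A b x =
     card_envelope \<mu> (x $ j + t *\<^sub>R w) - card_envelope \<mu> (x $ j)
     + 2 * t * (w \<bullet> (adjoint_mat cj A *v (A *v x - b)) $ j) + t\<^sup>2 * (norm (A *v axis j w))\<^sup>2"
proof -
  define r where "r = A *v x - b"
  have "Q2_card \<mu> (x + t *\<^sub>R axis j w) - Q2_card \<mu> x
      = (\<Sum>i\<in>UNIV. if i = j then card_envelope \<mu> (x $ j + t *\<^sub>R w) - card_envelope \<mu> (x $ j) else 0)"
    unfolding Q2_card_eq_sum_envelope sum_subtractf[symmetric]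
    by (rule sum.cong) (auto simp: axis_def)
  moreover have "A *v (x + t *\<^sub>R axis j w) - b = r + t *\<^sub>R (A *v axis j w)"
    unfolding r_def by (simp add: matrix_vector_right_distrib matrix_vector_mult_scaleR_right)
  hence "(norm (A *v (x + t *\<^sub>R axis j w) - b))\<^sup>2 - (norm r)\<^sup>2
      = 2 * t * (r \<bullet> (A *v axis j w)) + t\<^sup>2 * (norm (A *v axis j w))\<^sup>2"
    unfolding power2_norm_eq_inner by (simp add: inner_commute power2_eq_square algebra_simps)
  moreover have "r \<bullet> (A *v axis j w) = w \<bullet> (adjoint_mat cj A *v r) $ j"
    using adjoint_mat_inner[of A "axis j w" r] by (simp add: inner_commute inner_axis')
  ultimately show ?thesis unfolding K_reg_def r_def by simp
qed

lemma stationary_K_reg_axis_slope: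
  assumes "stationary (K_reg \<mu> A b) x" "w \<noteq> 0" "0 < \<delta>"
    and "\<And>t. 0 < t \<Longrightarrow> t < \<delta> \<Longrightarrow>
      card_envelope \<mu> (x $ j + t *\<^sub>R w) - card_envelope \<mu> (x $ j) \<le> t * a + t\<^sup>2 * C"
  shows "0 \<le> a + 2 * (w \<bullet> (adjoint_mat cj A *v (A *v x - b)) $ j)"
proof (rule stationary_imp_ray_slope_nonneg[OF assms(1)])
  show "axis j w \<noteq> 0" using assms(2) by simp
  fix t assume "0 < t" "t < \<delta>"
  from assms(4)[OF this] show "K_reg \<mu> A b (x + t *\<^sub>R axis j w) - K_reg \<mu> A b x
      \<le> t * (a + 2 * (w \<bullet> (adjoint_mat cj A *v (A *v x - b)) $ j))
        + t\<^sup>2 * (C + (norm (A *v axis j w))\<^sup>2)"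
    unfolding K_reg_axis_step by (simp add: algebra_simps)
qed (rule assms(3))

lemma stationary_K_reg_outside:
  assumes "stationary (K_reg \<mu> A b) x" "sqrt \<mu> \<le> norm (x $ j)"
  shows "(adjoint_mat cj A *v (A *v x - b)) $ j = 0" (is "?p = 0")
proof (rule ccontr)
  assume "?p \<noteq> 0"
  hence "0 \<le> 0 + 2 * (- ?p \<bullet> ?p)"
    by (intro stationary_K_reg_axis_slope[OF assms(1), of "- ?p" 1 j 0 0])
       (auto simp: card_envelope_outside[OF assms(2)] card_envelope_le)
  hence "?p \<bullet> ?p \<le> 0" by simp
  thus False using \<open>?p \<noteq> 0\<close> inner_gt_zero_iff[of ?p] by linarith
qed

lemma stationary_K_reg_zero:
  assumes "0 \<le> \<mu>" "stationary (K_reg \<mu> A b) x" "x $ j = 0"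
  shows "norm ((adjoint_mat cj A *v (A *v x - b)) $ j) \<le> sqrt \<mu>" (is "norm ?p \<le> _")
proof (cases "?p = 0")
  case False
  have "0 \<le> 2 * sqrt \<mu> * norm ?p + 2 * (- ?p \<bullet> ?p)"
  proof (rule stationary_K_reg_axis_slope[OF assms(2), of "- ?p" 1 j _ 0])
    fix t :: real assume "0 < t"
    thus "card_envelope \<mu> (x $ j + t *\<^sub>R - ?p) - card_envelope \<mu> (x $ j)
        \<le> t * (2 * sqrt \<mu> * norm ?p) + t\<^sup>2 * 0"
      using card_envelope_le_linear[OF assms(1), of "t *\<^sub>R - ?p"] assms(1,3)
      by (simp add: card_envelope_def ac_simps)
  qed (use False in auto)
  thus ?thesis using False by (simp add: power2_norm_eq_inner[symmetric] power2_eq_square)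
qed (simp add: assms(1))

(* With p = (A^*(Ax - b))_j, v is half the gradient at x_j of s \<mapsto> card_envelope mu s + 2 Re <s, p>,
   the part of K_reg that varies with x_j to first order; stationarity rules out the descent
   direction -v. *)
lemma stationary_K_reg_inside:
  assumes "0 \<le> \<mu>" "stationary (K_reg \<mu> A b) x" "x $ j \<noteq> 0" "norm (x $ j) < sqrt \<mu>"
  shows "(adjoint_mat cj A *v (A *v x - b)) $ j = (1 - sqrt \<mu> / norm (x $ j)) *\<^sub>R x $ j"
    (is "?p = _")
proof -
  define s where "s = norm (x $ j)"
  define v where "v = (sqrt \<mu> / s - 1) *\<^sub>R x $ j + ?p"
  have s: "0 < s" "s < sqrt \<mu>" using assms(3,4) unfolding s_def by auto
  have "v = 0"
  proof (rule ccontr)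
    assume "v \<noteq> 0"
    hence nv: "0 < norm v" by simp
    have "0 \<le> 2 * (((sqrt \<mu> / s - 1) *\<^sub>R x $ j) \<bullet> - v) + 2 * (- v \<bullet> ?p)"
    proof (rule stationary_K_reg_axis_slope[OF assms(2), of "- v"
        "min (s / norm v) ((sqrt \<mu> - s) / norm v)"])
      fix t :: real assume t: "0 < t" "t < min (s / norm v) ((sqrt \<mu> - s) / norm v)"
      hence "t * norm v \<le> s" "s + t * norm v \<le> sqrt \<mu>"
        using nv by (simp_all add: less_divide_eq)
      thus "card_envelope \<mu> (x $ j + t *\<^sub>R - v) - card_envelope \<mu> (x $ j)
          \<le> t * (2 * (((sqrt \<mu> / s - 1) *\<^sub>R x $ j) \<bullet> - v))
            + t\<^sup>2 * ((sqrt \<mu> / s - 1) * (norm (- v))\<^sup>2)"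
        using card_envelope_step_inside[OF assms(1,3), of t "- v"] t(1) unfolding s_def by simp
    qed (use nv s in auto)
    hence "0 \<le> - 2 * (v \<bullet> v)" unfolding v_def by (simp add: algebra_simps inner_commute)
    thus False using \<open>v \<noteq> 0\<close> inner_gt_zero_iff[of v] by linarith
  qed
  thus ?thesis unfolding v_def s_def by (simp add: algebra_simps eq_neg_iff_add_eq_0)
qed

lemma stationary_K_reg_hard_threshold_rel:
  assumes "0 \<le> \<mu>" "stationary (K_reg \<mu> A b) x"
  shows "hard_threshold_rel \<mu> (x $ j) ((x - adjoint_mat cj A *v (A *v x) + adjoint_mat cj A *v b) $ j)"
proof -
  have z: "(x - adjoint_mat cj A *v (A *v x) + adjoint_mat cj A *v b) $ j
      = x $ j - (adjoint_mat cj A *v (A *v x - b)) $ j"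
    by (simp add: matrix_vector_mult_diff_distrib)
  consider "sqrt \<mu> \<le> norm (x $ j)" | "x $ j = 0" | "x $ j \<noteq> 0" "norm (x $ j) < sqrt \<mu>"
    by linarith
  thus ?thesis
  proof cases
    case 1
    thus ?thesis using stationary_K_reg_outside[OF assms(2) 1] assms(1)
      unfolding z hard_threshold_rel_def by auto
  next
    case 2
    thus ?thesis using stationary_K_reg_zero[OF assms 2] assms(1)
      unfolding z hard_threshold_rel_def by auto
  next
    case 3
    thus ?thesis using stationary_K_reg_inside[OF assms 3]
      unfolding z hard_threshold_rel_def by (simp add: algebra_simps)
  qed
qed

lemma stationary_points_card_nz_gt:
  assumes "0 \<le> \<mu>" "0 < beta_k A N"
    and "stationary (K_reg \<mu> A b) x'" "stationary (K_reg \<mu> A b) x''" "x'' \<noteq> x'"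
    and "\<And>i. \<not> (beta_k A N ^ 2 * sqrt \<mu>
                  \<le> norm (((x' - adjoint_mat cj A *v (A *v x')) + adjoint_mat cj A *v b) $ i)
               \<and> norm (((x' - adjoint_mat cj A *v (A *v x')) + adjoint_mat cj A *v b) $ i)
                  \<le> sqrt \<mu> / beta_k A N ^ 2)"
  shows "N < card_nz (x'' - x')"
proof (rule ccontr)
  assume "\<not> N < card_nz (x'' - x')"
  define \<beta> d where "\<beta> = beta_k A N" and "d = x'' - x'"
  define z' z'' where "z' = x' - adjoint_mat cj A *v (A *v x') + adjoint_mat cj A *v b"
    and "z'' = x'' - adjoint_mat cj A *v (A *v x'') + adjoint_mat cj A *v b"
  have "d \<noteq> 0" "card_nz d \<le> N" using assms(5) \<open>\<not> N < card_nz (x'' - x')\<close> unfolding d_def by auto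
  have "z'' - z' = d - adjoint_mat cj A *v (A *v d)"
    unfolding z'_def z''_def d_def by (simp add: algebra_simps)
  hence "(z'' - z') \<bullet> d = d \<bullet> d - (adjoint_mat cj A *v (A *v d)) \<bullet> d"
    by (simp add: inner_diff_left)
  also have "\<dots> = (norm d)\<^sup>2 - (norm (A *v d))\<^sup>2"
    using adjoint_mat_inner[of A d "A *v d"] by (simp add: power2_norm_eq_inner inner_commute)
  also have "\<dots> \<le> (1 - \<beta>\<^sup>2) * (norm d)\<^sup>2"
  proof -
    have "\<beta> * norm d \<le> norm (A *v d)"
      unfolding \<beta>_def by (rule beta_k_mult_norm_le) fact+
    hence "(\<beta> * norm d)\<^sup>2 \<le> (norm (A *v d))\<^sup>2"
      using assms(2) unfolding \<beta>_def by (intro power_mono) auto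
    thus ?thesis by (simp add: algebra_simps)
  qed
  finally have "(z'' - z') \<bullet> d \<le> (1 - \<beta>\<^sup>2) * (norm d)\<^sup>2" .
  moreover have "(1 - \<beta>\<^sup>2) * (norm d)\<^sup>2 < (z'' - z') \<bullet> d"
    unfolding d_def z'_def z''_def \<beta>_def
    by (rule hard_threshold_rel_vec_strongly_monotone)
       (use assms stationary_K_reg_hard_threshold_rel in auto)
  ultimately show False by simp
qed

end

interpretation real_conjugation: conjugation "id :: real \<Rightarrow> real"
  by unfold_locales simp

interpretation complex_conjugation: conjugation cnj
  by unfold_locales (simp add: inner_complex_def algebra_simps)

theorem theorem4p2:
  shows
  "(\<forall>(A::real^'n^'m) (b::real^'m) (\<mu>::real) (N::nat) x' x''.
      \<mu> > 0 \<and> N \<ge> 1 \<and> beta_k A N > 0 \<and>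
      stationary (K_reg \<mu> A b) x' \<and>
      (\<forall>i. \<not> (beta_k A N ^ 2 * sqrt \<mu> \<le> norm (((x' - adjoint_mat id A *v (A *v x')) + adjoint_mat id A *v b) $ i)
              \<and> norm (((x' - adjoint_mat id A *v (A *v x')) + adjoint_mat id A *v b) $ i) \<le> sqrt \<mu> / beta_k A N ^ 2)) \<and>
      stationary (K_reg \<mu> A b) x'' \<and> x'' \<noteq> x'
      \<longrightarrow> card_nz (x'' - x') > N)
 \<and> (\<forall>(A::complex^'n^'m) (b::complex^'m) (\<mu>::real) (N::nat) x' x''.
      \<mu> > 0 \<and> N \<ge> 1 \<and> beta_k A N > 0 \<and>
      stationary (K_reg \<mu> A b) x' \<and>
      (\<forall>i. \<not> (beta_k A N ^ 2 * sqrt \<mu> \<le> norm (((x' - adjoint_mat cnj A *v (A *v x')) + adjoint_mat cnj A *v b) $ i)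
              \<and> norm (((x' - adjoint_mat cnj A *v (A *v x')) + adjoint_mat cnj A *v b) $ i) \<le> sqrt \<mu> / beta_k A N ^ 2)) \<and>
      stationary (K_reg \<mu> A b) x'' \<and> x'' \<noteq> x'
      \<longrightarrow> card_nz (x'' - x') > N)"
  by (intro conjI allI impI; elim conjE;
      rule real_conjugation.stationary_points_card_nz_gt
        complex_conjugation.stationary_points_card_nz_gt; force)

end
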